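(* Let $\mathcal{L}$ be a family of oriented balanced algebraic laws. Assume that for all $f,g$ in the positive geometry monoid $\mathcal{G}^+(\mathcal{L})$ there exist $f',g'\in\mathcal{G}^+(\mathcal{L})$ with $f\bullet g'=g\bullet f'$ and such that the domain of $f\bullet g'$ is the intersection of the domains of $f$ and $g$. Then the rewrite system $R^+_{\mathcal{L}}$ is confluent.
   Context: Terms over a signature $\Sigma$ and an infinite set of variables; addresses are finite sequences of positive integers, $t/\alpha$ the subterm at $\alpha$. A law is balanced if both sides contain the same variables. For an oriented law $L=(l,r)$ and an address $\alpha$, $O^+_{L,\alpha}$ is the partial map sending $t$ with $t/\alpha=l\sigma$ (for a substitution $\sigma$) to the term obtained by replacing that subterm by $r\sigma$. Operators act on the right and $f\bullet g$ means "$f$ then $g$". $\mathcal{G}^+(\mathcal{L})$ is the monoid of partial maps generated by all $O^+_{L,\alpha}$, $L\in\mathcal{L}$, $\alpha$ any address. $R^+_{\mathcal{L}}$ is the rewrite system with rules $l\to r$ for $(l,r)\in\mathcal{L}$ (applied to substitution instances in arbitrary subterms); writing $t\to^* t'$ when $t$ rewrites to $t'$ in finitely many (possibly zero) steps, $R^+_{\mathcal{L}}$ is confluent if whenever $t\to^*t'$ and $t\to^*t''$ there is $t'''$ with $t'\to^*t'''$ and $t''\to^*t'''$. *)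

theory Defs
  imports Main
begin

datatype ('f, 'v) trm = Var 'v | Fun 'f "('f, 'v) trm list"

fun wf_trm :: "('f \<Rightarrow> nat) \<Rightarrow> ('f, 'v) trm \<Rightarrow> bool" where
  "wf_trm ar (Var x) = True"
| "wf_trm ar (Fun f ts) = (length ts = ar f \<and> (\<forall>t\<in>set ts. wf_trm ar t))"

fun vars :: "('f, 'v) trm \<Rightarrow> 'v set" where
  "vars (Var x) = {x}"
| "vars (Fun f ts) = \<Union> (set (map vars ts))"

fun subst :: "('v \<Rightarrow> ('f, 'v) trm) \<Rightarrow> ('f, 'v) trm \<Rightarrow> ('f, 'v) trm" where
  "subst \<sigma> (Var x) = \<sigma> x"
| "subst \<sigma> (Fun f ts) = Fun f (map (subst \<sigma>) ts)"

text \<open>Addresses: lists of positive integers (1-based argument positions).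
  subterm t alpha = Some (t/alpha), or None if alpha is not an address of t.\<close>
primrec subterm :: "('f, 'v) trm \<Rightarrow> nat list \<Rightarrow> ('f, 'v) trm option" where
  "subterm t [] = Some t"
| "subterm t (i # \<alpha>) = (case t of Var x \<Rightarrow> None
      | Fun f ts \<Rightarrow> if 1 \<le> i \<and> i \<le> length ts then subterm (ts ! (i - 1)) \<alpha> else None)"

primrec replace :: "('f, 'v) trm \<Rightarrow> nat list \<Rightarrow> ('f, 'v) trm \<Rightarrow> ('f, 'v) trm" where
  "replace t [] s = s"
| "replace t (i # \<alpha>) s = (case t of Var x \<Rightarrow> Var x
      | Fun f ts \<Rightarrow> if 1 \<le> i \<and> i \<le> length ts
                   then Fun f (ts[i - 1 := replace (ts ! (i - 1)) \<alpha> s]) else Fun f ts)"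

type_synonym ('f, 'v) law = "('f, 'v) trm \<times> ('f, 'v) trm"

definition balanced :: "('f, 'v) law \<Rightarrow> bool" where
  "balanced L \<longleftrightarrow> vars (fst L) = vars (snd L)"

definition law_over :: "('f \<Rightarrow> nat) \<Rightarrow> ('f, 'v) law \<Rightarrow> bool" where
  "law_over ar L \<longleftrightarrow> wf_trm ar (fst L) \<and> wf_trm ar (snd L)"

definition seq :: "('a \<rightharpoonup> 'a) \<Rightarrow> ('a \<rightharpoonup> 'a) \<Rightarrow> ('a \<rightharpoonup> 'a)" (infixl "\<bullet>" 70) where
  "f \<bullet> g = (\<lambda>t. Option.bind (f t) g)"

definition opP :: "('f \<Rightarrow> nat) \<Rightarrow> ('f, 'v) law \<Rightarrow> nat list \<Rightarrow> ('f, 'v) trm \<rightharpoonup> ('f, 'v) trm" where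
  "opP ar L \<alpha> t = (if wf_trm ar t \<and> (\<exists>\<sigma>. subterm t \<alpha> = Some (subst \<sigma> (fst L)))
     then Some (replace t \<alpha> (subst (SOME \<sigma>. subterm t \<alpha> = Some (subst \<sigma> (fst L))) (snd L)))
     else None)"

definition idP :: "('f \<Rightarrow> nat) \<Rightarrow> ('f, 'v) trm \<rightharpoonup> ('f, 'v) trm" where
  "idP ar t = (if wf_trm ar t then Some t else None)"

inductive_set geomP :: "('f \<Rightarrow> nat) \<Rightarrow> ('f, 'v) law set \<Rightarrow> (('f, 'v) trm \<rightharpoonup> ('f, 'v) trm) set"
  for ar Ls where
  idI: "idP ar \<in> geomP ar Ls"
| stepI: "f \<in> geomP ar Ls \<Longrightarrow> L \<in> Ls \<Longrightarrow> f \<bullet> opP ar L \<alpha> \<in> geomP ar Ls"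

definition rstep :: "('f, 'v) law set \<Rightarrow> ('f, 'v) trm \<Rightarrow> ('f, 'v) trm \<Rightarrow> bool" where
  "rstep Ls t t' \<longleftrightarrow> (\<exists>L\<in>Ls. \<exists>\<alpha> \<sigma>. subterm t \<alpha> = Some (subst \<sigma> (fst L))
                         \<and> t' = replace t \<alpha> (subst \<sigma> (snd L)))"

definition confluent_on :: "('f \<Rightarrow> nat) \<Rightarrow> ('f, 'v) law set \<Rightarrow> bool" where
  "confluent_on ar Ls \<longleftrightarrow> (\<forall>t t' t''. wf_trm ar t \<longrightarrow> (rstep Ls)\<^sup>*\<^sup>* t t' \<longrightarrow> (rstep Ls)\<^sup>*\<^sup>* t t''
      \<longrightarrow> (\<exists>t'''. (rstep Ls)\<^sup>*\<^sup>* t' t''' \<and> (rstep Ls)\<^sup>*\<^sup>* t'' t'''))"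

end

theory Submission
  imports Defs
begin

text \<open>
  Rewriting a term t over the signature in finitely many steps is the same as applying
  some element of the positive geometry monoid to t: each step at address \<alpha> with law L
  is an application of the operator for L at \<alpha>. Hence, given t \<rightarrow>* t' and t \<rightarrow>* t'', pick
  f, g in the monoid with f t = t' and g t = t''. The hypothesis yields f', g' with
  f \<bullet> g' = g \<bullet> f' defined at t, as t lies in the domains of f and g; its value at t is
  a common reduct, reached from t' by g' and from t'' by f'.

  Since the operator picks an arbitrary matching substitution, identifying it with a
  rewrite step needs the right-hand side to have no variables beyond the left-hand side,
  on which all matching substitutions agree.
\<close>

lemma subst_cong: "(\<And>x. x \<in> vars t \<Longrightarrow> \<sigma> x = \<tau> x) \<Longrightarrow> subst \<sigma> t = subst \<tau> t"
  by (induction t) auto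

lemma subst_eq_imp_agree: "subst \<sigma> t = subst \<tau> t \<Longrightarrow> x \<in> vars t \<Longrightarrow> \<sigma> x = \<tau> x"
  by (induction t) (auto simp: map_eq_conv)

lemma wf_subst_imp_wf_vars: "wf_trm ar (subst \<sigma> t) \<Longrightarrow> x \<in> vars t \<Longrightarrow> wf_trm ar (\<sigma> x)"
  by (induction t) auto

lemma wf_subst: "wf_trm ar t \<Longrightarrow> (\<And>x. x \<in> vars t \<Longrightarrow> wf_trm ar (\<sigma> x)) \<Longrightarrow> wf_trm ar (subst \<sigma> t)"
  by (induction t) auto

lemma wf_subterm: "wf_trm ar t \<Longrightarrow> subterm t \<alpha> = Some s \<Longrightarrow> wf_trm ar s"
proof (induction \<alpha> arbitrary: t)
  case (Cons i \<alpha>)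
  then obtain f ts where t: "t = Fun f ts" and i: "1 \<le> i" "i \<le> length ts"
    and sub: "subterm (ts ! (i - 1)) \<alpha> = Some s"
    by (auto split: trm.splits if_splits)
  have "ts ! (i - 1) \<in> set ts"
    using i by (intro nth_mem) arith
  then show ?case
    using Cons.prems(1) Cons.IH sub t by auto
qed simp

lemma wf_replace: "wf_trm ar t \<Longrightarrow> wf_trm ar s \<Longrightarrow> wf_trm ar (replace t \<alpha> s)"
proof (induction \<alpha> arbitrary: t)
  case (Cons i \<alpha>)
  show ?case
  proof (cases t)
    case (Fun f ts)
    let ?u = "replace (ts ! (i - 1)) \<alpha> s"
    have "wf_trm ar ?u" if "1 \<le> i \<and> i \<le> length ts"
      using Cons Fun that by auto
    then show ?thesis
      using Fun Cons.prems set_update_subset_insert[of ts "i - 1" ?u] by auto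
  qed simp
qed simp

lemma wf_replace_instance:
  assumes "wf_trm ar t" "subterm t \<alpha> = Some (subst \<sigma> l)" "wf_trm ar r" "vars r \<subseteq> vars l"
  shows "wf_trm ar (replace t \<alpha> (subst \<sigma> r))"
proof -
  have "wf_trm ar (subst \<sigma> l)"
    using assms(1,2) by (rule wf_subterm)
  then have "wf_trm ar (subst \<sigma> r)"
    using assms(3,4) by (auto intro: wf_subst dest: wf_subst_imp_wf_vars)
  with assms(1) show ?thesis
    by (rule wf_replace)
qed

lemma rstep_preserves_wf:
  assumes "\<forall>L\<in>Ls. law_over ar L \<and> vars (snd L) \<subseteq> vars (fst L)"
    and "rstep Ls t s" "wf_trm ar t"
  shows "wf_trm ar s"
  using assms by (auto simp: rstep_def law_over_def intro: wf_replace_instance)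

lemma rtranclp_rstep_preserves_wf:
  assumes "\<forall>L\<in>Ls. law_over ar L \<and> vars (snd L) \<subseteq> vars (fst L)"
    and "(rstep Ls)\<^sup>*\<^sup>* t s" "wf_trm ar t"
  shows "wf_trm ar s"
  using assms(2,3) by induction (use assms(1) rstep_preserves_wf in blast)+

lemma seq_eq_Some_iff: "(f \<bullet> g) t = Some u \<longleftrightarrow> (\<exists>v. f t = Some v \<and> g v = Some u)"
  by (auto simp: seq_def split: Option.bind_splits)

lemma opP_eq_Some_imp_rstep:
  assumes "opP ar L \<alpha> t = Some s" "L \<in> Ls"
  shows "rstep Ls t s"
proof -
  from assms(1) have ex: "\<exists>\<sigma>. subterm t \<alpha> = Some (subst \<sigma> (fst L))"
    and s: "s = replace t \<alpha> (subst (SOME \<sigma>. subterm t \<alpha> = Some (subst \<sigma> (fst L))) (snd L))"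
    by (auto simp: opP_def split: if_splits)
  show ?thesis
    unfolding rstep_def using someI_ex[OF ex] s assms(2) by blast
qed

lemma opP_eq_SomeI:
  assumes "vars (snd L) \<subseteq> vars (fst L)" "wf_trm ar t"
    and "subterm t \<alpha> = Some (subst \<sigma> (fst L))"
  shows "opP ar L \<alpha> t = Some (replace t \<alpha> (subst \<sigma> (snd L)))"
proof -
  define \<tau> where "\<tau> = (SOME \<sigma>. subterm t \<alpha> = Some (subst \<sigma> (fst L)))"
  have "subterm t \<alpha> = Some (subst \<tau> (fst L))"
    unfolding \<tau>_def using assms(3) by (rule someI[where P = "\<lambda>\<sigma>. subterm t \<alpha> = Some (subst \<sigma> (fst L))"])
  then have "subst \<tau> (fst L) = subst \<sigma> (fst L)"
    using assms(3) by simp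
  then have "subst \<tau> (snd L) = subst \<sigma> (snd L)"
    using assms(1) by (auto intro: subst_cong dest: subst_eq_imp_agree)
  then show ?thesis
    using assms(2,3) unfolding opP_def \<tau>_def by auto
qed

lemma geomP_imp_rtranclp_rstep:
  assumes "f \<in> geomP ar Ls" "f t = Some s"
  shows "(rstep Ls)\<^sup>*\<^sup>* t s"
  using assms
proof (induction arbitrary: s rule: geomP.induct)
  case idI
  then show ?case by (simp add: idP_def split: if_splits)
next
  case (stepI f L \<alpha>)
  then obtain u where "f t = Some u" "opP ar L \<alpha> u = Some s"
    by (auto simp: seq_eq_Some_iff)
  then show ?case
    using stepI.IH opP_eq_Some_imp_rstep stepI.hyps(2) by (metis rtranclp.rtrancl_into_rtrancl)
qed

lemma rtranclp_rstep_imp_geomP: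
  assumes laws: "\<forall>L\<in>Ls. law_over ar L \<and> vars (snd L) \<subseteq> vars (fst L)"
    and "wf_trm ar t" "(rstep Ls)\<^sup>*\<^sup>* t s"
  shows "\<exists>f\<in>geomP ar Ls. f t = Some s"
  using assms(3)
proof induction
  case base
  have "idP ar t = Some t"
    using assms(2) by (simp add: idP_def)
  then show ?case
    using geomP.idI by blast
next
  case (step u s)
  then obtain f where f: "f \<in> geomP ar Ls" "f t = Some u"
    by blast
  from step.hyps(2) obtain L \<alpha> \<sigma> where L: "L \<in> Ls" "subterm u \<alpha> = Some (subst \<sigma> (fst L))"
    and s: "s = replace u \<alpha> (subst \<sigma> (snd L))"
    unfolding rstep_def by blast
  have "wf_trm ar u"
    using rtranclp_rstep_preserves_wf[OF laws step.hyps(1) assms(2)] .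
  then have "opP ar L \<alpha> u = Some s"
    using opP_eq_SomeI[OF _ _ L(2)] L(1) laws s by blast
  then have "(f \<bullet> opP ar L \<alpha>) t = Some s"
    using f(2) by (simp add: seq_eq_Some_iff)
  then show ?case
    using geomP.stepI[OF f(1) L(1)] by blast
qed

theorem proposition5p2:
  fixes ar :: "'f \<Rightarrow> nat" and Ls :: "('f, 'v) law set"
  assumes "infinite (UNIV :: 'v set)"
    and "\<forall>L\<in>Ls. law_over ar L \<and> balanced L"
    and "\<forall>f\<in>geomP ar Ls. \<forall>g\<in>geomP ar Ls. \<exists>f'\<in>geomP ar Ls. \<exists>g'\<in>geomP ar Ls.
           f \<bullet> g' = g \<bullet> f' \<and> dom (f \<bullet> g') = dom f \<inter> dom g"
  shows "confluent_on ar Ls"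
  unfolding confluent_on_def
proof (intro allI impI)
  fix t t' t''
  assume t: "wf_trm ar t" and "(rstep Ls)\<^sup>*\<^sup>* t t'" "(rstep Ls)\<^sup>*\<^sup>* t t''"
  have laws: "\<forall>L\<in>Ls. law_over ar L \<and> vars (snd L) \<subseteq> vars (fst L)"
    using assms(2) by (simp add: balanced_def)
  obtain f g where f: "f \<in> geomP ar Ls" "f t = Some t'" and g: "g \<in> geomP ar Ls" "g t = Some t''"
    using rtranclp_rstep_imp_geomP[OF laws t] \<open>(rstep Ls)\<^sup>*\<^sup>* t t'\<close> \<open>(rstep Ls)\<^sup>*\<^sup>* t t''\<close>
    by metis
  then obtain f' g' where f': "f' \<in> geomP ar Ls" and g': "g' \<in> geomP ar Ls"
    and comm: "f \<bullet> g' = g \<bullet> f'" and dom: "dom (f \<bullet> g') = dom f \<inter> dom g"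
    using assms(3) by blast
  have "t \<in> dom (f \<bullet> g')"
    unfolding dom using f(2) g(2) by blast
  then obtain u where u: "(f \<bullet> g') t = Some u" "(g \<bullet> f') t = Some u"
    unfolding comm by blast
  then have "g' t' = Some u" "f' t'' = Some u"
    using f(2) g(2) by (simp_all add: seq_eq_Some_iff)
  then show "\<exists>t'''. (rstep Ls)\<^sup>*\<^sup>* t' t''' \<and> (rstep Ls)\<^sup>*\<^sup>* t'' t'''"
    using geomP_imp_rtranclp_rstep f' g' by blast
qed

end
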